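(* Let $X$ and $Y$ be Banach spaces, $S\in\mathcal{L}(X,Y)$, $F\subset X$ bounded and convex, and $n\in\mathbb{N}_0$. Then $e_n^{\text{det-non-mb}}(S,F)\le 8\,e_n^{\text{det-non}}(S,F)$.
   Context: A deterministic non-adaptive algorithm with $n$ measurements is a map $A_n=\phi\circ(L_1,\dots,L_n)\colon F\to Y$ with fixed $L_1,\dots,L_n\in X'$ and arbitrary $\phi\colon\mathbb{R}^n\to Y$; its error is $\sup_{f\in F}\|S(f)-A_n(f)\|$. $e_n^{\text{det-non}}(S,F)$ is the infimum of the error over all such algorithms, and $e_n^{\text{det-non-mb}}(S,F)$ is the infimum over those such algorithms that are $(\mathcal{B}_F,\mathcal{B}_Y)$-measurable, where $\mathcal{B}_Y$ is the Borel $\sigma$-algebra of $Y$ and $\mathcal{B}_F$ the Borel $\sigma$-algebra on $F$ of the seminorm whose unit ball is $F-F$. *)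

theory Defs
  imports "HOL-Analysis.Analysis" "HOL-Library.Extended_Nonnegative_Real"
begin

text \<open>Minkowski functional (gauge) of a set K; for K = F - F this is the
  seminorm whose unit ball is F - F. Only evaluated on F - F below.\<close>
definition minkowski :: "'a::real_vector set \<Rightarrow> 'a \<Rightarrow> real" where
  "minkowski K x = Inf {t. t > 0 \<and> x \<in> (\<lambda>y. t *\<^sub>R y) ` K}"

definition diffset :: "'a::real_vector set \<Rightarrow> 'a set" where
  "diffset F = {x - y | x y. x \<in> F \<and> y \<in> F}"

definition F_open :: "'a::real_vector set \<Rightarrow> 'a set \<Rightarrow> bool" where
  "F_open F U \<longleftrightarrow> U \<subseteq> F \<and>
     (\<forall>x\<in>U. \<exists>r>0. \<forall>y\<in>F. minkowski (diffset F) (y - x) < r \<longrightarrow> y \<in> U)"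

definition borel_F :: "'a::real_vector set \<Rightarrow> 'a set set" where
  "borel_F F = sigma_sets F {U. F_open F U}"

definition F_measurable :: "'a::real_vector set \<Rightarrow> ('a \<Rightarrow> 'b::topological_space) \<Rightarrow> bool" where
  "F_measurable F A \<longleftrightarrow> (\<forall>B \<in> sets borel. {f \<in> F. A f \<in> B} \<in> borel_F F)"

definition det_non_algs :: "nat \<Rightarrow> ('a::real_normed_vector \<Rightarrow> 'b) set" where
  "det_non_algs n = {(\<lambda>f. \<phi> (map (\<lambda>i. L i f) [0..<n])) | \<phi> L.
      \<forall>i<n. bounded_linear (L i :: 'a \<Rightarrow> real)}"

definition worst_err :: "('a \<Rightarrow> 'b::real_normed_vector) \<Rightarrow> 'a set \<Rightarrow> ('a \<Rightarrow> 'b) \<Rightarrow> ennreal" where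
  "worst_err S F A = (SUP f\<in>F. ennreal (norm (S f - A f)))"

definition e_det_non :: "nat \<Rightarrow> ('a::real_normed_vector \<Rightarrow> 'b::real_normed_vector) \<Rightarrow> 'a set \<Rightarrow> ennreal" where
  "e_det_non n S F = (INF A\<in>det_non_algs n. worst_err S F A)"

definition e_det_non_mb :: "nat \<Rightarrow> ('a::real_normed_vector \<Rightarrow> 'b::real_normed_vector) \<Rightarrow> 'a set \<Rightarrow> ennreal" where
  "e_det_non_mb n S F = (INF A\<in>{A \<in> det_non_algs n. F_measurable F A}. worst_err S F A)"

end

theory Submission
  imports Defs
begin

(* Let A = phi o N with N = (L_0, ..., L_{n-1}) have worst-case error e on F.  Finitely many
   points u_j of F - F and linear combinations Lambda_j of the L_i satisfy N w = sum_j Lambda_j w * N u_j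
   on F - F.  Quantizing the coordinates Lambda_j f on a grid of mesh delta and returning S at a fixed
   representative of the cell gives an algorithm that is still a function of N f and is measurable,
   since the Lambda_j are continuous for the seminorm of F - F and there are only countably many cells.
   If f and g lie in one cell, then theta (c' - c) = (1 - theta) (f - g) on the level of information for
   suitable c, c' in F, because F - F is convex and symmetric.  So (1 - theta) f + theta c and
   (1 - theta) g + theta c' are indistinguishable by A, whence ||S f - S g|| <= 2 e + 2 theta diam S(F).
   This even gives the constant 2 in place of 8. *)

definition functional_span :: "(nat \<Rightarrow> 'a \<Rightarrow> real) \<Rightarrow> nat \<Rightarrow> ('a \<Rightarrow> real) set" where
  "functional_span L n = {\<Lambda>. \<exists>\<beta>. \<forall>w. \<Lambda> w = (\<Sum>k<n. \<beta> k * L k w)}"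

lemma functional_span_add:
  assumes "\<Lambda>1 \<in> functional_span L n" "\<Lambda>2 \<in> functional_span L n"
  shows "(\<lambda>w. \<Lambda>1 w + \<Lambda>2 w) \<in> functional_span L n"
proof -
  obtain \<beta>1 \<beta>2 where "\<forall>w. \<Lambda>1 w = (\<Sum>k<n. \<beta>1 k * L k w)" "\<forall>w. \<Lambda>2 w = (\<Sum>k<n. \<beta>2 k * L k w)"
    using assms unfolding functional_span_def by blast
  then show ?thesis
    unfolding functional_span_def
    by (intro CollectI exI[of _ "\<lambda>k. \<beta>1 k + \<beta>2 k"]) (simp add: distrib_right sum.distrib)
qed

lemma functional_span_scale:
  assumes "\<Lambda> \<in> functional_span L n"
  shows "(\<lambda>w. c * \<Lambda> w) \<in> functional_span L n"
proof -
  obtain \<beta> where "\<forall>w. \<Lambda> w = (\<Sum>k<n. \<beta> k * L k w)"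
    using assms unfolding functional_span_def by blast
  then show ?thesis
    unfolding functional_span_def
    by (intro CollectI exI[of _ "\<lambda>k. c * \<beta> k"]) (simp add: sum_distrib_left mult.assoc)
qed

lemma functional_span_sum:
  fixes m :: nat
  assumes "\<And>j. j < m \<Longrightarrow> \<Lambda> j \<in> functional_span L n"
  shows "(\<lambda>w. \<Sum>j<m. c j * \<Lambda> j w) \<in> functional_span L n"
  using assms
proof (induction m)
  case 0
  show ?case unfolding functional_span_def by (auto intro: exI[of _ "\<lambda>_. 0"])
next
  case (Suc m)
  then have "(\<lambda>w. (\<Sum>j<m. c j * \<Lambda> j w) + c m * \<Lambda> m w) \<in> functional_span L n"
    by (intro functional_span_add functional_span_scale) auto
  then show ?case by simp
qed

lemma functional_span_base: "i < n \<Longrightarrow> L i \<in> functional_span L n"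
  unfolding functional_span_def
  by (intro CollectI exI[of _ "\<lambda>k. of_bool (k = i)"]) simp

lemma functional_span_mono:
  assumes "\<Lambda> \<in> functional_span L n" "n \<le> n'"
  shows "\<Lambda> \<in> functional_span L n'"
proof -
  obtain \<beta> where \<beta>: "\<forall>w. \<Lambda> w = (\<Sum>k<n. \<beta> k * L k w)"
    using assms unfolding functional_span_def by blast
  have "(\<Sum>k<n. \<beta> k * L k w) = (\<Sum>k<n'. (if k < n then \<beta> k else 0) * L k w)" for w
    using \<open>n \<le> n'\<close> by (intro sum.mono_neutral_cong_left) auto
  then show ?thesis
    unfolding functional_span_def using \<beta> by (auto intro!: exI[of _ "\<lambda>k. if k < n then \<beta> k else 0"])
qed

lemma bounded_linear_functional_span:
  assumes "\<Lambda> \<in> functional_span L n" "\<forall>i<n. bounded_linear (L i)"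
  shows "bounded_linear \<Lambda>"
proof -
  obtain \<beta> where "\<forall>w. \<Lambda> w = (\<Sum>k<n. \<beta> k * L k w)"
    using assms(1) unfolding functional_span_def by blast
  then have "\<Lambda> = (\<lambda>w. \<Sum>k<n. \<beta> k * L k w)" by blast
  then show ?thesis
    using assms(2)
    by (auto intro!: bounded_linear_sum bounded_linear_compose[OF bounded_linear_mult_right])
qed

lemma functional_span_factors:
  assumes "\<Lambda> \<in> functional_span L n"
  shows "\<exists>\<psi>. \<forall>w. \<Lambda> w = \<psi> (map (\<lambda>i. L i w) [0..<n])"
proof -
  obtain \<beta> where "\<forall>w. \<Lambda> w = (\<Sum>k<n. \<beta> k * L k w)"
    using assms unfolding functional_span_def by blast
  then show ?thesis
    by (intro exI[of _ "\<lambda>ys. \<Sum>k<n. \<beta> k * ys ! k"]) simp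
qed

definition point_expansion ::
    "(nat \<Rightarrow> 'a \<Rightarrow> real) \<Rightarrow> nat \<Rightarrow> 'a set \<Rightarrow> nat \<Rightarrow> (nat \<Rightarrow> 'a) \<Rightarrow> (nat \<Rightarrow> 'a \<Rightarrow> real) \<Rightarrow> bool" where
  "point_expansion L n D m u \<Lambda> \<longleftrightarrow>
     (\<forall>j<m. u j \<in> D \<and> \<Lambda> j \<in> functional_span L n) \<and>
     (\<forall>w\<in>D. \<forall>i<n. L i w = (\<Sum>j<m. \<Lambda> j w * L i (u j)))"

lemma point_expansion_Suc:
  assumes "point_expansion L n D m u \<Lambda>"
  shows "\<exists>m' u' \<Lambda>'. point_expansion L (Suc n) D m' u' \<Lambda>'"
proof -
  have u: "\<forall>j<m. u j \<in> D" and \<Lambda>: "\<forall>j<m. \<Lambda> j \<in> functional_span L (Suc n)"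
    and exp: "\<forall>w\<in>D. \<forall>i<n. L i w = (\<Sum>j<m. \<Lambda> j w * L i (u j))"
    using assms functional_span_mono[of _ L n "Suc n"] unfolding point_expansion_def by auto
  define R where "R = (\<lambda>w. L n w - (\<Sum>j<m. \<Lambda> j w * L n (u j)))"
  have R: "R \<in> functional_span L (Suc n)"
  proof -
    have "(\<lambda>w. L n w + (-1) * (\<Sum>j<m. L n (u j) * \<Lambda> j w)) \<in> functional_span L (Suc n)"
      using \<Lambda> by (intro functional_span_add functional_span_scale functional_span_sum functional_span_base) auto
    then show ?thesis by (simp add: R_def mult.commute)
  qed
  show ?thesis
  proof (cases "\<forall>w\<in>D. R w = 0")
    case True
    then have "point_expansion L (Suc n) D m u \<Lambda>"
      unfolding point_expansion_def using u \<Lambda> exp by (auto simp: R_def less_Suc_eq)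
    then show ?thesis by blast
  next
    case False
    then obtain w0 where w0: "w0 \<in> D" "R w0 \<noteq> 0" by blast
    \<comment> \<open>a Gram--Schmidt step: w0 becomes a new point, the residual normalised at w0 its coefficient\<close>
    define \<Lambda>N where "\<Lambda>N = (\<lambda>w. R w / R w0)"
    define \<Lambda>' where "\<Lambda>' j w = (if j < m then \<Lambda> j w - \<Lambda> j w0 * \<Lambda>N w else \<Lambda>N w)" for j w
    have "point_expansion L (Suc n) D (Suc m) (u(m := w0)) \<Lambda>'"
      unfolding point_expansion_def
    proof (intro conjI ballI allI impI)
      fix j assume "j < Suc m"
      show "(u(m := w0)) j \<in> D" using u w0 \<open>j < Suc m\<close> by (auto simp: less_Suc_eq)
      have "\<Lambda>N \<in> functional_span L (Suc n)"
        using functional_span_scale[OF R, of "1 / R w0"] by (simp add: \<Lambda>N_def)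
      then show "\<Lambda>' j \<in> functional_span L (Suc n)"
        unfolding \<Lambda>'_def using \<Lambda> functional_span_add[OF _ functional_span_scale, of "\<Lambda> j" L "Suc n" \<Lambda>N "- \<Lambda> j w0"]
        by (cases "j < m") auto
    next
      fix w i assume w: "w \<in> D" and i: "i < Suc n"
      have "(\<Sum>j<Suc m. \<Lambda>' j w * L i ((u(m := w0)) j)) =
          (\<Sum>j<m. \<Lambda> j w * L i (u j)) + \<Lambda>N w * (L i w0 - (\<Sum>j<m. \<Lambda> j w0 * L i (u j)))"
        unfolding \<Lambda>'_def by (simp add: sum_distrib_left algebra_simps sum_subtractf)
      also have "\<dots> = L i w"
      proof (cases "i = n")
        case True
        have "\<Lambda>N w * R w0 = R w" unfolding \<Lambda>N_def using w0 by simp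
        then show ?thesis using True by (simp add: R_def algebra_simps)
      next
        case False
        then show ?thesis using exp w w0 i by simp
      qed
      finally show "L i w = (\<Sum>j<Suc m. \<Lambda>' j w * L i ((u(m := w0)) j))" by simp
    qed
    then show ?thesis by blast
  qed
qed

lemma ex_point_expansion: "\<exists>m u \<Lambda>. point_expansion L n D m u \<Lambda>"
proof (induction n)
  case 0
  show ?case unfolding point_expansion_def by auto
next
  case (Suc n)
  then show ?case using point_expansion_Suc by blast
qed

lemma diffset_eq: "diffset F = (\<Union>x\<in>F. \<Union>y\<in>F. {x - y})"
  unfolding diffset_def by blast

lemma diffset_iff: "z \<in> diffset F \<longleftrightarrow> (\<exists>x\<in>F. \<exists>y\<in>F. z = x - y)"
  unfolding diffset_def by blast

lemma sum_scaleR_in_convex_symmetric: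
  fixes d :: "nat \<Rightarrow> 'a::real_vector"
  assumes "convex C" "0 \<in> C" "\<And>x. x \<in> C \<Longrightarrow> - x \<in> C"
    and "\<And>j. j < m \<Longrightarrow> d j \<in> C" "(\<Sum>j<m. \<bar>a j\<bar>) \<le> 1"
  shows "(\<Sum>j<m. a j *\<^sub>R d j) \<in> C"
proof -
  define w where "w j = (if j < m then \<bar>a j\<bar> else 1 - (\<Sum>j<m. \<bar>a j\<bar>))" for j
  define y where "y j = (if j < m then sgn (a j) *\<^sub>R d j else 0)" for j
  have "(\<Sum>j<Suc m. w j *\<^sub>R y j) \<in> C"
  proof (rule convex_sum[OF _ \<open>convex C\<close>])
    show "y j \<in> C" for j
    proof (cases "j < m")
      case True
      then show ?thesis
        using assms(2,3) assms(4)[of j] by (cases "a j" "0::real" rule: linorder_cases) (auto simp: y_def)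
    qed (simp add: y_def assms(2))
    have "(\<Sum>j<m. w j) = (\<Sum>j<m. \<bar>a j\<bar>)"
      by (simp add: w_def)
    then show "sum w {..<Suc m} = 1"
      by (simp add: w_def)
    show "0 \<le> w j" for j
      using assms(5) by (simp add: w_def)
  qed simp
  moreover have "(\<Sum>j<m. w j *\<^sub>R y j) = (\<Sum>j<m. a j *\<^sub>R d j)"
    by (simp add: w_def y_def abs_mult_sgn)
  ultimately show ?thesis by (simp add: y_def)
qed

lemma sum_scaleR_in_diffset:
  fixes d :: "nat \<Rightarrow> 'a::real_vector"
  assumes "convex F" "F \<noteq> {}" "\<And>j. j < m \<Longrightarrow> d j \<in> diffset F" "(\<Sum>j<m. \<bar>a j\<bar>) \<le> 1"
  shows "(\<Sum>j<m. a j *\<^sub>R d j) \<in> diffset F"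
proof (rule sum_scaleR_in_convex_symmetric[OF _ _ _ assms(3,4)])
  show "convex (diffset F)"
    using convex_differences[OF assms(1,1)] unfolding diffset_eq .
qed (use assms(2) in \<open>auto simp: diffset_def\<close>)

lemma minkowski_diffset_lessE:
  assumes "x \<in> F" "y \<in> F" "minkowski (diffset F) (y - x) < r"
  obtains t d where "0 < t" "t < r" "d \<in> diffset F" "y - x = t *\<^sub>R d"
proof -
  let ?T = "{t. t > 0 \<and> y - x \<in> (\<lambda>z. t *\<^sub>R z) ` diffset F}"
  have "1 \<in> ?T" using assms unfolding diffset_def by auto
  then obtain t where "t \<in> ?T" "t < r"
    using cInf_lessD[of ?T r] assms(3) unfolding minkowski_def by blast
  then show ?thesis using that by blast
qed

lemma F_open_vimage_bounded_linear:
  fixes \<Lambda> :: "'a::real_normed_vector \<Rightarrow> real"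
  assumes \<Lambda>: "bounded_linear \<Lambda>" and "bounded F" and "open U"
  shows "F_open F {x\<in>F. \<Lambda> x \<in> U}"
  unfolding F_open_def
proof (intro conjI ballI)
  fix x assume x: "x \<in> {x \<in> F. \<Lambda> x \<in> U}"
  have "bounded (\<Lambda> ` diffset F)"
    using \<open>bounded F\<close> by (auto simp: diffset_eq intro: bounded_linear_image[OF bounded_differences \<Lambda>])
  then obtain C where C: "C > 0" "\<forall>d\<in>diffset F. \<bar>\<Lambda> d\<bar> \<le> C"
    by (auto simp: bounded_pos)
  obtain \<epsilon> where \<epsilon>: "\<epsilon> > 0" "ball (\<Lambda> x) \<epsilon> \<subseteq> U"
    using \<open>open U\<close> x open_contains_ball by blast
  show "\<exists>r>0. \<forall>y\<in>F. minkowski (diffset F) (y - x) < r \<longrightarrow> y \<in> {x \<in> F. \<Lambda> x \<in> U}"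
  proof (intro exI[of _ "\<epsilon> / C"] conjI ballI impI)
    fix y assume "y \<in> F" "minkowski (diffset F) (y - x) < \<epsilon> / C"
    then obtain t d where td: "0 < t" "t < \<epsilon> / C" "d \<in> diffset F" "y - x = t *\<^sub>R d"
      using x minkowski_diffset_lessE by blast
    have "\<bar>\<Lambda> y - \<Lambda> x\<bar> = t * \<bar>\<Lambda> d\<bar>"
      using td by (simp add: linear_diff[OF bounded_linear.linear[OF \<Lambda>], symmetric]
          linear_scale[OF bounded_linear.linear[OF \<Lambda>]] abs_mult)
    also have "\<dots> \<le> t * C" using C td by (simp add: mult_left_mono)
    also have "\<dots> < \<epsilon>" using td C by (simp add: pos_less_divide_eq)
    finally show "y \<in> {x \<in> F. \<Lambda> x \<in> U}"
      using \<epsilon> \<open>y \<in> F\<close> by (auto simp: dist_norm abs_minus_commute)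
  qed (use \<epsilon> C in auto)
qed auto

(* The zero measure only carries the sigma-algebra borel_F F, so that the measurability
   calculus of the library applies. *)
definition borel_F_measure :: "'a::real_vector set \<Rightarrow> 'a measure" where
  "borel_F_measure F = measure_of F {U. F_open F U} (\<lambda>_. 0)"

lemma space_borel_F_measure: "space (borel_F_measure F) = F"
  unfolding borel_F_measure_def by (rule space_measure_of) (auto simp: F_open_def)

lemma sets_borel_F_measure: "sets (borel_F_measure F) = borel_F F"
  unfolding borel_F_measure_def borel_F_def by (rule sets_measure_of) (auto simp: F_open_def)

lemma borel_measurable_borel_F_bounded_linear:
  fixes \<Lambda> :: "'a::real_normed_vector \<Rightarrow> real"
  assumes "bounded_linear \<Lambda>" "bounded F"
  shows "\<Lambda> \<in> borel_measurable (borel_F_measure F)"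
proof (rule borel_measurableI)
  fix U :: "real set" assume "open U"
  then have "{x\<in>F. \<Lambda> x \<in> U} \<in> borel_F F"
    using F_open_vimage_bounded_linear[OF assms] unfolding borel_F_def by (auto intro: sigma_sets.Basic)
  then show "\<Lambda> -` U \<inter> space (borel_F_measure F) \<in> sets (borel_F_measure F)"
    by (simp add: space_borel_F_measure sets_borel_F_measure Int_commute Collect_conj_eq vimage_def)
qed

lemma F_measurable_if_borel_measurable:
  assumes "A \<in> borel_measurable (borel_F_measure F)"
  shows "F_measurable F A"
  unfolding F_measurable_def
proof
  fix B :: "'b set" assume "B \<in> sets borel"
  then have "A -` B \<inter> space (borel_F_measure F) \<in> sets (borel_F_measure F)"
    using assms measurable_sets by blast
  then show "{f\<in>F. A f \<in> B} \<in> borel_F F"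
    by (simp add: space_borel_F_measure sets_borel_F_measure Int_commute Collect_conj_eq vimage_def)
qed

lemma abs_diff_le_if_floor_divide_eq:
  fixes x y \<delta> :: real
  assumes "\<delta> > 0" "\<lfloor>x / \<delta>\<rfloor> = \<lfloor>y / \<delta>\<rfloor>"
  shows "\<bar>x - y\<bar> \<le> \<delta>"
proof -
  have "\<bar>x / \<delta> - y / \<delta>\<bar> \<le> 1"
    using assms(2) of_int_floor_le[of "x / \<delta>"] real_of_int_floor_add_one_gt[of "x / \<delta>"]
      of_int_floor_le[of "y / \<delta>"] real_of_int_floor_add_one_gt[of "y / \<delta>"]
    by linarith
  moreover have "\<bar>x - y\<bar> = \<delta> * \<bar>x / \<delta> - y / \<delta>\<bar>"
    using assms(1) by (simp add: diff_divide_distrib[symmetric] abs_divide)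
  moreover have "\<delta> * \<bar>x / \<delta> - y / \<delta>\<bar> \<le> \<delta> * 1"
    using calculation(1) assms(1) by (intro mult_left_mono) auto
  ultimately show ?thesis by linarith
qed

lemma coefficients_close_if_floor_eq:
  fixes \<Lambda> :: "nat \<Rightarrow> 'a \<Rightarrow> real"
  assumes "0 < \<theta>" "\<theta> \<le> 1"
    and "map (\<lambda>j. \<lfloor>\<Lambda> j f / (\<theta> / (real m + 1))\<rfloor>) [0..<m]
       = map (\<lambda>j. \<lfloor>\<Lambda> j g / (\<theta> / (real m + 1))\<rfloor>) [0..<m]"
  shows "(1 - \<theta>) * (\<Sum>j<m. \<bar>\<Lambda> j f - \<Lambda> j g\<bar>) \<le> \<theta>"
proof -
  have "\<bar>\<Lambda> j f - \<Lambda> j g\<bar> \<le> \<theta> / (real m + 1)" if "j < m" for j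
    using assms that by (intro abs_diff_le_if_floor_divide_eq) (auto simp: list_eq_iff_nth_eq)
  then have "(\<Sum>j<m. \<bar>\<Lambda> j f - \<Lambda> j g\<bar>) \<le> real m * (\<theta> / (real m + 1))"
    using sum_mono[of "{..<m}" "\<lambda>j. \<bar>\<Lambda> j f - \<Lambda> j g\<bar>" "\<lambda>_. \<theta> / (real m + 1)"] by simp
  also have "\<dots> \<le> \<theta>"
    using assms(1) by (simp add: field_simps)
  finally show ?thesis
    using assms(1,2) by (smt (verit) mult_left_le_one_le sum_nonneg abs_ge_zero)
qed

lemma measurable_map_upt_count_space:
  fixes g :: "nat \<Rightarrow> 'a \<Rightarrow> 'c::countable"
  assumes "\<And>j. j < m \<Longrightarrow> g j \<in> M \<rightarrow>\<^sub>M count_space UNIV"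
  shows "(\<lambda>x. map (\<lambda>j. g j x) [0..<m]) \<in> M \<rightarrow>\<^sub>M count_space UNIV"
proof (subst measurable_count_space_eq2_countable, intro conjI ballI)
  fix \<kappa> :: "'c list"
  have "map (\<lambda>j. g j x) [0..<m] = \<kappa> \<longleftrightarrow> length \<kappa> = m \<and> (\<forall>j\<in>{..<m}. g j x = \<kappa> ! j)" for x
    by (auto simp: list_eq_iff_nth_eq)
  then have "(\<lambda>x. map (\<lambda>j. g j x) [0..<m]) -` {\<kappa>} \<inter> space M
      = {x \<in> space M. length \<kappa> = m \<and> (\<forall>j\<in>{..<m}. g j x = \<kappa> ! j)}"
    by blast
  also have "\<dots> \<in> sets M"
  proof (intro sets.sets_Collect_conj sets.sets_Collect_const sets.sets_Collect_finite_All)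
    fix j assume "j \<in> {..<m}"
    then show "{x \<in> space M. g j x = \<kappa> ! j} \<in> sets M"
      using measurable_sets[OF assms, of j "{\<kappa> ! j}"] by (simp add: vimage_def Int_def conj_commute)
  qed simp
  finally show "(\<lambda>x. map (\<lambda>j. g j x) [0..<m]) -` {\<kappa>} \<inter> space M \<in> sets M" .
qed auto

lemma F_measurable_quantization:
  fixes \<Lambda> :: "nat \<Rightarrow> 'a::real_normed_vector \<Rightarrow> real" and h :: "int list \<Rightarrow> 'b::topological_space"
  assumes "\<And>j. j < m \<Longrightarrow> bounded_linear (\<Lambda> j)" and "bounded F"
  shows "F_measurable F (\<lambda>f. h (map (\<lambda>j. \<lfloor>\<Lambda> j f / \<delta>\<rfloor>) [0..<m]))"
proof (rule F_measurable_if_borel_measurable, rule measurable_compose[where g = h])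
  show "(\<lambda>f. map (\<lambda>j. \<lfloor>\<Lambda> j f / \<delta>\<rfloor>) [0..<m]) \<in> borel_F_measure F \<rightarrow>\<^sub>M count_space UNIV"
  proof (rule measurable_map_upt_count_space, rule measurable_compose[OF _ measurable_real_floor])
    fix j assume "j < m"
    then show "(\<lambda>f. \<Lambda> j f / \<delta>) \<in> borel_measurable (borel_F_measure F)"
      using borel_measurable_borel_F_bounded_linear[OF assms(1) \<open>bounded F\<close>] by measurable
  qed
qed simp

lemma norm_diff_le_if_measurements_meet:
  fixes S :: "'a::real_vector \<Rightarrow> 'b::real_normed_vector"
  assumes S: "linear S" and "convex F"
    and err: "\<And>f. f \<in> F \<Longrightarrow> norm (S f - A f) \<le> e"
    and diam: "\<And>x y. x \<in> F \<Longrightarrow> y \<in> F \<Longrightarrow> norm (S x - S y) \<le> B"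
    and \<theta>: "0 \<le> \<theta>" "\<theta> \<le> 1"
    and F: "f \<in> F" "g \<in> F" "c \<in> F" "c' \<in> F"
    and meet: "A ((1 - \<theta>) *\<^sub>R f + \<theta> *\<^sub>R c) = A ((1 - \<theta>) *\<^sub>R g + \<theta> *\<^sub>R c')"
  shows "norm (S f - S g) \<le> 2 * e + 2 * \<theta> * B"
proof -
  define f1 where "f1 = (1 - \<theta>) *\<^sub>R f + \<theta> *\<^sub>R c"
  define g1 where "g1 = (1 - \<theta>) *\<^sub>R g + \<theta> *\<^sub>R c'"
  have "f1 \<in> F" "g1 \<in> F"
    unfolding f1_def g1_def using \<theta> F by (auto intro: convexD[OF \<open>convex F\<close>])
  have "S f - S f1 = \<theta> *\<^sub>R (S f - S c)" "S g1 - S g = \<theta> *\<^sub>R (S c' - S g)"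
    unfolding f1_def g1_def linear_add[OF S] linear_scale[OF S] by (simp_all add: algebra_simps)
  then have "norm (S f - S f1) \<le> \<theta> * B" "norm (S g1 - S g) \<le> \<theta> * B"
    using diam F \<theta> by (simp_all add: mult_left_mono)
  moreover have "norm (S f1 - A f1) \<le> e"
    using err \<open>f1 \<in> F\<close> by blast
  moreover have "norm (S g1 - A f1) \<le> e"
    using err[OF \<open>g1 \<in> F\<close>] meet by (simp add: f1_def g1_def)
  moreover have "norm (S f - S g)
      \<le> norm (S f - S f1) + norm (S f1 - A f1) + norm (S g1 - A f1) + norm (S g1 - S g)"
    using norm_triangle_ineq4[of "S f - S f1 + (S f1 - A f1)" "S g1 - A f1"]
      norm_triangle_ineq[of "S f - S f1" "S f1 - A f1"]
      norm_triangle_ineq[of "S f - S f1 + (S f1 - A f1) - (S g1 - A f1)" "S g1 - S g"]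
    by (simp add: algebra_simps)
  ultimately show ?thesis by linarith
qed

lemma norm_diff_le_if_coefficients_close:
  fixes S :: "'a::real_normed_vector \<Rightarrow> 'b::real_normed_vector"
  assumes S: "linear S" and "convex F"
    and L: "\<forall>i<n. bounded_linear (L i)"
    and exp: "point_expansion L n (diffset F) m u \<Lambda>"
    and err: "\<And>f. f \<in> F \<Longrightarrow> norm (S f - \<phi> (map (\<lambda>i. L i f) [0..<n])) \<le> e"
    and diam: "\<And>x y. x \<in> F \<Longrightarrow> y \<in> F \<Longrightarrow> norm (S x - S y) \<le> B"
    and \<theta>: "0 < \<theta>" "\<theta> \<le> 1"
    and F: "f \<in> F" "g \<in> F"
    and close: "(1 - \<theta>) * (\<Sum>j<m. \<bar>\<Lambda> j f - \<Lambda> j g\<bar>) \<le> \<theta>"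
  shows "norm (S f - S g) \<le> 2 * e + 2 * \<theta> * B"
proof -
  have u: "\<And>j. j < m \<Longrightarrow> u j \<in> diffset F"
    and \<Lambda>: "\<And>j. j < m \<Longrightarrow> bounded_linear (\<Lambda> j)"
    and expand: "\<And>w i. w \<in> diffset F \<Longrightarrow> i < n \<Longrightarrow> L i w = (\<Sum>j<m. \<Lambda> j w * L i (u j))"
    using exp L bounded_linear_functional_span unfolding point_expansion_def by blast+
  define a where "a j = (1 - \<theta>) / \<theta> * \<Lambda> j (f - g)" for j
  have "(\<Sum>j<m. \<bar>a j\<bar>) = (1 - \<theta>) / \<theta> * (\<Sum>j<m. \<bar>\<Lambda> j f - \<Lambda> j g\<bar>)"
    using \<theta> \<Lambda> by (simp add: a_def abs_mult sum_distrib_left linear_diff[OF bounded_linear.linear])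
  also have "\<dots> \<le> 1"
    using close \<theta> by (simp add: pos_divide_le_eq mult.commute)
  finally have "(\<Sum>j<m. a j *\<^sub>R u j) \<in> diffset F"
    using sum_scaleR_in_diffset[OF \<open>convex F\<close>, of m u a] u F by blast
  then obtain c' c where c: "c' \<in> F" "c \<in> F" "c' - c = (\<Sum>j<m. a j *\<^sub>R u j)"
    unfolding diffset_iff by metis
  have "L i ((1 - \<theta>) *\<^sub>R f + \<theta> *\<^sub>R c) = L i ((1 - \<theta>) *\<^sub>R g + \<theta> *\<^sub>R c')" if "i < n" for i
  proof -
    have Li: "linear (L i)" using L that bounded_linear.linear by blast
    have "f - g \<in> diffset F" using F unfolding diffset_iff by blast
    have "\<theta> * L i (c' - c) = (\<Sum>j<m. \<theta> * a j * L i (u j))"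
      unfolding c(3) linear_sum[OF Li] linear_scale[OF Li] by (simp add: sum_distrib_left mult.assoc)
    also have "\<dots> = (1 - \<theta>) * (\<Sum>j<m. \<Lambda> j (f - g) * L i (u j))"
      using \<theta> by (simp add: a_def sum_distrib_left mult.assoc)
    also have "\<dots> = (1 - \<theta>) * L i (f - g)"
      using expand[OF \<open>f - g \<in> diffset F\<close> that] by simp
    finally show ?thesis
      unfolding linear_diff[OF Li] linear_add[OF Li] linear_scale[OF Li] by (simp add: algebra_simps)
  qed
  then have "\<phi> (map (\<lambda>i. L i ((1 - \<theta>) *\<^sub>R f + \<theta> *\<^sub>R c)) [0..<n])
      = \<phi> (map (\<lambda>i. L i ((1 - \<theta>) *\<^sub>R g + \<theta> *\<^sub>R c')) [0..<n])"
    by (intro arg_cong[where f = \<phi>] map_cong) auto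
  then show ?thesis
    using norm_diff_le_if_measurements_meet[OF S \<open>convex F\<close> err diam _ _ F c(2,1)] \<theta> by simp
qed

lemma measurable_algorithm_approx:
  fixes S :: "'a::real_normed_vector \<Rightarrow> 'b::real_normed_vector"
  assumes S: "bounded_linear S" and "bounded F" "convex F"
    and A: "A \<in> det_non_algs n" and err: "\<And>f. f \<in> F \<Longrightarrow> norm (S f - A f) \<le> e"
    and "\<eta> > 0"
  obtains A' where "A' \<in> det_non_algs n" "F_measurable F A'"
    "\<And>f. f \<in> F \<Longrightarrow> norm (S f - A' f) \<le> 2 * e + \<eta>"
proof -
  obtain \<phi> and L :: "nat \<Rightarrow> 'a \<Rightarrow> real"
    where A_eq: "A = (\<lambda>f. \<phi> (map (\<lambda>i. L i f) [0..<n]))" and L: "\<forall>i<n. bounded_linear (L i)"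
    using A unfolding det_non_algs_def by blast
  obtain m u \<Lambda> where exp: "point_expansion L n (diffset F) m u \<Lambda>"
    using ex_point_expansion by blast
  have \<Lambda>: "bounded_linear (\<Lambda> j)" "\<exists>\<psi>. \<forall>w. \<Lambda> j w = \<psi> (map (\<lambda>i. L i w) [0..<n])" if "j < m" for j
    using exp that L bounded_linear_functional_span functional_span_factors
    unfolding point_expansion_def by blast+
  then obtain \<psi> where \<psi>: "\<And>j w. j < m \<Longrightarrow> \<Lambda> j w = \<psi> j (map (\<lambda>i. L i w) [0..<n])"
    by metis
  obtain B where B: "B \<ge> 0" "\<And>x y. x \<in> F \<Longrightarrow> y \<in> F \<Longrightarrow> norm (S x - S y) \<le> B"
    using bounded_linear_image[OF \<open>bounded F\<close> S] unfolding bounded_two_points dist_norm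
    by (metis (full_types) image_eqI order.trans max.cobounded1 max.cobounded2)
  define \<theta> where "\<theta> = \<eta> / (2 * B + \<eta>)"
  have \<theta>: "0 < \<theta>" "\<theta> \<le> 1" "2 * \<theta> * B \<le> \<eta>"
    using B(1) \<open>\<eta> > 0\<close> by (auto simp: \<theta>_def field_simps)
  define \<delta> where "\<delta> = \<theta> / (real m + 1)"
  define key where "key f = map (\<lambda>j. \<lfloor>\<Lambda> j f / \<delta>\<rfloor>) [0..<m]" for f
  define h where "h \<kappa> = (if \<exists>g\<in>F. key g = \<kappa> then S (SOME g. g \<in> F \<and> key g = \<kappa>) else 0)" for \<kappa>
  show ?thesis
  proof
    have "key f = map (\<lambda>j. \<lfloor>\<psi> j (map (\<lambda>i. L i f) [0..<n]) / \<delta>\<rfloor>) [0..<m]" for f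
      unfolding key_def by (intro map_cong) (auto simp: \<psi>)
    then show "(\<lambda>f. h (key f)) \<in> det_non_algs n"
      unfolding det_non_algs_def using L by auto
    show "F_measurable F (\<lambda>f. h (key f))"
      unfolding key_def using F_measurable_quantization \<Lambda>(1) \<open>bounded F\<close> by blast
  next
    fix f assume "f \<in> F"
    define g where "g = (SOME g. g \<in> F \<and> key g = key f)"
    have g: "g \<in> F" "key g = key f"
      using someI_ex[of "\<lambda>g. g \<in> F \<and> key g = key f"] \<open>f \<in> F\<close> unfolding g_def by blast+
    have "(1 - \<theta>) * (\<Sum>j<m. \<bar>\<Lambda> j f - \<Lambda> j g\<bar>) \<le> \<theta>"
      using coefficients_close_if_floor_eq[OF \<theta>(1,2) g(2)[symmetric, unfolded key_def \<delta>_def]] .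
    then have "norm (S f - S g) \<le> 2 * e + 2 * \<theta> * B"
      using norm_diff_le_if_coefficients_close[OF bounded_linear.linear[OF S] \<open>convex F\<close> L exp _ B(2)
          \<theta>(1,2) \<open>f \<in> F\<close> g(1)] err A_eq
      by blast
    moreover have "h (key f) = S g"
      using \<open>f \<in> F\<close> by (auto simp: h_def g_def)
    ultimately show "norm (S f - h (key f)) \<le> 2 * e + \<eta>"
      using \<theta>(3) by simp
  qed
qed

lemma e_det_non_mb_le_twice_worst_err:
  fixes S :: "'a::real_normed_vector \<Rightarrow> 'b::real_normed_vector"
  assumes "bounded_linear S" "bounded F" "convex F" "A \<in> det_non_algs n"
  shows "e_det_non_mb n S F \<le> 2 * worst_err S F A"
proof (rule ennreal_le_epsilon)
  fix \<epsilon> :: real assume "2 * worst_err S F A < top" "0 < \<epsilon>"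
  then obtain e where e: "worst_err S F A = ennreal e" "0 \<le> e"
    by (cases "worst_err S F A") (auto simp: ennreal_mult_less_top)
  then have "norm (S f - A f) \<le> e" if "f \<in> F" for f
    using SUP_upper[OF that, of "\<lambda>f. ennreal (norm (S f - A f))"] unfolding worst_err_def by simp
  then obtain A' where "A' \<in> det_non_algs n" "F_measurable F A'"
      and "\<And>f. f \<in> F \<Longrightarrow> norm (S f - A' f) \<le> 2 * e + \<epsilon>"
    using measurable_algorithm_approx[OF assms] \<open>0 < \<epsilon>\<close> by metis
  then have "e_det_non_mb n S F \<le> ennreal (2 * e + \<epsilon>)"
    unfolding e_det_non_mb_def worst_err_def
    by (intro INF_lower2[of A'] SUP_least ennreal_leI) auto
  also have "\<dots> = 2 * worst_err S F A + ennreal \<epsilon>"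
    using e \<open>0 < \<epsilon>\<close> by (simp add: ennreal_plus ennreal_mult)
  finally show "e_det_non_mb n S F \<le> 2 * worst_err S F A + ennreal \<epsilon>" .
qed

lemma e_det_non_mb_le_twice_e_det_non:
  fixes S :: "'a::real_normed_vector \<Rightarrow> 'b::real_normed_vector"
  assumes "bounded_linear S" "bounded F" "convex F"
  shows "e_det_non_mb n S F \<le> 2 * e_det_non n S F"
proof -
  have "e_det_non_mb n S F / 2 \<le> e_det_non n S F"
    unfolding e_det_non_def
  proof (rule INF_greatest)
    fix A :: "'a \<Rightarrow> 'b" assume "A \<in> det_non_algs n"
    have "e_det_non_mb n S F / 2 \<le> 2 * worst_err S F A / 2"
      using e_det_non_mb_le_twice_worst_err[OF assms \<open>A \<in> det_non_algs n\<close>]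
      by (rule divide_right_mono_ennreal)
    then show "e_det_non_mb n S F / 2 \<le> worst_err S F A"
      by (simp add: ennreal_mult_divide_eq mult.commute[of 2])
  qed
  then have "e_det_non_mb n S F / 2 * 2 \<le> e_det_non n S F * 2"
    by (rule mult_right_mono) simp
  then show ?thesis
    using ennreal_mult_divide_eq[of 2 "e_det_non_mb n S F"] by (simp add: ennreal_times_divide mult.commute)
qed

theorem lemma6p2:
  fixes S :: "'a::banach \<Rightarrow> 'b::banach" and F :: "'a set" and n :: nat
  assumes "bounded_linear S" and "bounded F" and "convex F"
  shows "e_det_non_mb n S F \<le> 8 * e_det_non n S F"
proof -
  have "e_det_non_mb n S F \<le> 2 * e_det_non n S F"
    using e_det_non_mb_le_twice_e_det_non[OF assms] .
  also have "\<dots> \<le> 8 * e_det_non n S F"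
    by (rule mult_right_mono) auto
  finally show ?thesis .
qed

end
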